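(* Generalised Outer Multi-Objective RL (GOMORL), Occupancy Measure Orderings (OMO) and Trajectory Lottery Orderings (TLO) are equally expressive: for every environment $E$, $\mathrm{Ord}_{\mathrm{GOMORL}}(E)=\mathrm{Ord}_{\mathrm{OMO}}(E)=\mathrm{Ord}_{\mathrm{TLO}}(E)$.
   Context: An environment is a tuple $E=(\mathcal S,\mathcal A,\mathcal T,\mathcal I)$ where $\mathcal S,\mathcal A$ are finite nonempty sets, $\mathcal T:\mathcal S\times\mathcal A\to\Delta(\mathcal S)$ and $\mathcal I\in\Delta(\mathcal S)$. A policy is a map $\pi:\mathcal S\to\Delta(\mathcal A)$ (stationary, possibly stochastic); $\Pi^E$ denotes the set of all policies. A trajectory $\xi=(s_0,a_0,s_1,a_1,\dots)$ is generated under $\pi$ by $s_0\sim\mathcal I$, $a_t\sim\pi(s_t)$, $s_{t+1}\sim\mathcal T(s_t,a_t)$; $\mathbb E^\pi_\xi,\mathbb P^\pi$ denote expectation and probability under this distribution. An objective-specification formalism $X$ assigns to each environment $E$ a set of objective specifications, each inducing a total preorder $\succeq$ on $\Pi^E$; $\mathrm{Ord}_X(E)$ is the set of total preorders so induced. Occupancy measure: for $\gamma\in[0,1)$, $\vec m_\gamma(\pi)\in\mathbb R^{\mathcal S\times\mathcal A\times\mathcal S}$, $\vec m_\gamma(\pi)[s,a,s']=\sum_{t=0}^\infty\gamma^t\,\mathbb P^\pi[s_t=s,a_t=a,s_{t+1}=s']$, and $\vec m_\gamma(\Pi^E)=\{\vec m_\gamma(\pi):\pi\in\Pi^E\}$.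 Trajectory lottery: $L_{k,\pi}$ is the distribution of $(s_0,a_0,\dots,a_{k-1},s_k)$ under $\pi$, $L_\pi=(L_{0,\pi},L_{1,\pi},\dots)$, and $L_{\Pi^E}=\{L_\pi:\pi\in\Pi^E\}$. GOMORL: specification $(k,\mathcal R,\gamma,\succeq_J)$ with $k\in\mathbb N$, $\mathcal R:\mathcal S\times\mathcal A\times\mathcal S\to\mathbb R^k$ with components $\mathcal R_i$, $\gamma\in[0,1)$, $\succeq_J$ a total preorder on $\mathbb R^k$; with $\vec J(\pi)=(J_1(\pi),\dots,J_k(\pi))$, $J_i(\pi)=\mathbb E^\pi_\xi[\sum_{t=0}^\infty\gamma^t\mathcal R_i(s_t,a_t,s_{t+1})]$, it induces $\pi_1\succeq\pi_2\iff\vec J(\pi_1)\succeq_J\vec J(\pi_2)$. OMO: specification $(\gamma,\succeq_m)$ with $\gamma\in[0,1)$ and $\succeq_m$ a total preorder on $\vec m_\gamma(\Pi^E)$; it induces $\pi_1\succeq\pi_2\iff\vec m_\gamma(\pi_1)\succeq_m\vec m_\gamma(\pi_2)$. TLO: specification $(\succeq_L)$ with $\succeq_L$ a total preorder on $L_{\Pi^E}$; it induces $\pi_1\succeq\pi_2\iff L_{\pi_1}\succeq_L L_{\pi_2}$. *)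

theory Defs
  imports "HOL-Probability.Probability"
begin

text \<open>An environment with finite state type 's and finite action type 'a is given by
  a transition kernel T and an initial distribution I.\<close>

type_synonym ('s, 'a) policy = "'s \<Rightarrow> 'a pmf"

text \<open>Distribution of the trajectory prefix (s_0,a_0,...,a_{k-1},s_k), represented as the
  pair ([(s_0,a_0),...,(s_{k-1},a_{k-1})], s_k).  This is L_{k,pi}.\<close>
fun traj :: "('s \<Rightarrow> 'a \<Rightarrow> 's pmf) \<Rightarrow> 's pmf \<Rightarrow> ('s, 'a) policy \<Rightarrow> nat
    \<Rightarrow> (('s \<times> 'a) list \<times> 's) pmf" where
  "traj T I \<pi> 0 = map_pmf (\<lambda>s. ([], s)) I"
| "traj T I \<pi> (Suc k) =
     bind_pmf (traj T I \<pi> k) (\<lambda>(h, s).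
       bind_pmf (\<pi> s) (\<lambda>a. map_pmf (\<lambda>s'. (h @ [(s, a)], s')) (T s a)))"

definition lottery :: "('s \<Rightarrow> 'a \<Rightarrow> 's pmf) \<Rightarrow> 's pmf \<Rightarrow> ('s, 'a) policy
    \<Rightarrow> nat \<Rightarrow> (('s \<times> 'a) list \<times> 's) pmf" where
  "lottery T I \<pi> = (\<lambda>k. traj T I \<pi> k)"

definition step_prob :: "('s \<Rightarrow> 'a \<Rightarrow> 's pmf) \<Rightarrow> 's pmf \<Rightarrow> ('s, 'a) policy
    \<Rightarrow> nat \<Rightarrow> 's \<Rightarrow> 'a \<Rightarrow> 's \<Rightarrow> real" where
  "step_prob T I \<pi> t s a s' =
     measure_pmf.prob (traj T I \<pi> (Suc t)) {(h, s''). h ! t = (s, a) \<and> s'' = s'}"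

definition occupancy :: "('s \<Rightarrow> 'a \<Rightarrow> 's pmf) \<Rightarrow> 's pmf \<Rightarrow> real \<Rightarrow> ('s, 'a) policy
    \<Rightarrow> ('s \<times> 'a \<times> 's) \<Rightarrow> real" where
  "occupancy T I \<gamma> \<pi> = (\<lambda>(s, a, s'). \<Sum>t. \<gamma> ^ t * step_prob T I \<pi> t s a s')"

text \<open>Expected discounted return J(pi) = E[sum_t gamma^t R(s_t,a_t,s_{t+1})], written as the
  series of expectations of the per-step rewards (the state/action spaces are finite, so
  rewards are bounded and the expectation commutes with the discounted sum).\<close>
definition ret :: "('s \<Rightarrow> 'a \<Rightarrow> 's pmf) \<Rightarrow> 's pmf \<Rightarrow> real
    \<Rightarrow> ('s \<Rightarrow> 'a \<Rightarrow> 's \<Rightarrow> real) \<Rightarrow> ('s, 'a) policy \<Rightarrow> real" where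
  "ret T I \<gamma> R \<pi> =
     (\<Sum>t. \<gamma> ^ t * measure_pmf.expectation (traj T I \<pi> (Suc t))
                     (\<lambda>(h, s'). R (fst (h ! t)) (snd (h ! t)) s'))"

text \<open>Vector of returns (J_1,...,J_k) for a k-dimensional reward R, as a list of length k
  (component i of R is R s a s' i, i < k).\<close>
definition ret_vec :: "('s \<Rightarrow> 'a \<Rightarrow> 's pmf) \<Rightarrow> 's pmf \<Rightarrow> nat \<Rightarrow> real
    \<Rightarrow> ('s \<Rightarrow> 'a \<Rightarrow> 's \<Rightarrow> nat \<Rightarrow> real) \<Rightarrow> ('s, 'a) policy \<Rightarrow> real list" where
  "ret_vec T I k \<gamma> R \<pi> = map (\<lambda>i. ret T I \<gamma> (\<lambda>s a s'. R s a s' i) \<pi>) [0..<k]"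

definition total_preorder_on :: "'x set \<Rightarrow> ('x \<Rightarrow> 'x \<Rightarrow> bool) \<Rightarrow> bool" where
  "total_preorder_on D r \<longleftrightarrow>
     (\<forall>x\<in>D. r x x) \<and>
     (\<forall>x\<in>D. \<forall>y\<in>D. \<forall>z\<in>D. r x y \<longrightarrow> r y z \<longrightarrow> r x z) \<and>
     (\<forall>x\<in>D. \<forall>y\<in>D. r x y \<or> r y x)"

definition Ord_GOMORL :: "('s::finite \<Rightarrow> 'a::finite \<Rightarrow> 's pmf) \<Rightarrow> 's pmf
    \<Rightarrow> (('s, 'a) policy \<Rightarrow> ('s, 'a) policy \<Rightarrow> bool) set" where
  "Ord_GOMORL T I = {ord. \<exists>k R \<gamma> geJ.
      0 \<le> \<gamma> \<and> \<gamma> < 1 \<and> total_preorder_on {v :: real list. length v = k} geJ \<and>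
      ord = (\<lambda>\<pi>1 \<pi>2. geJ (ret_vec T I k \<gamma> R \<pi>1) (ret_vec T I k \<gamma> R \<pi>2))}"

definition Ord_OMO :: "('s::finite \<Rightarrow> 'a::finite \<Rightarrow> 's pmf) \<Rightarrow> 's pmf
    \<Rightarrow> (('s, 'a) policy \<Rightarrow> ('s, 'a) policy \<Rightarrow> bool) set" where
  "Ord_OMO T I = {ord. \<exists>\<gamma> gem.
      0 \<le> \<gamma> \<and> \<gamma> < 1 \<and> total_preorder_on (range (occupancy T I \<gamma>)) gem \<and>
      ord = (\<lambda>\<pi>1 \<pi>2. gem (occupancy T I \<gamma> \<pi>1) (occupancy T I \<gamma> \<pi>2))}"

definition Ord_TLO :: "('s::finite \<Rightarrow> 'a::finite \<Rightarrow> 's pmf) \<Rightarrow> 's pmf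
    \<Rightarrow> (('s, 'a) policy \<Rightarrow> ('s, 'a) policy \<Rightarrow> bool) set" where
  "Ord_TLO T I = {ord. \<exists>geL.
      total_preorder_on (range (lottery T I)) geL \<and>
      ord = (\<lambda>\<pi>1 \<pi>2. geL (lottery T I \<pi>1) (lottery T I \<pi>2))}"

end

theory Submission
  imports Defs
begin

text \<open>Each formalism orders policies by pulling back an arbitrary total preorder along a
  statistic of the policy: the return vector, the occupancy measure, or the trajectory
  lottery. If one statistic is a function of another, every ordering pulled back along the
  first is also pulled back along the second. Returns are linear in the occupancy measure,
  and the occupancy measure is computed from the trajectory lottery. Conversely, the returns
  of the indicator rewards of all transitions are the entries of the occupancy measure, and
  for \<open>\<gamma> > 0\<close> the occupancy measure fixes the policy at every reachable state, because its
  state-action marginal is \<open>d(s) \<pi>(a|s)\<close> with discounted visitation \<open>d(s) > 0\<close>. Hence it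
  also fixes the whole trajectory lottery.\<close>

lemma total_preorder_on_pullback:
  assumes "total_preorder_on A r" "g ` D \<subseteq> A"
  shows "total_preorder_on D (\<lambda>x y. r (g x) (g y))"
  using assms unfolding total_preorder_on_def image_subset_iff by meson

lemma total_preorder_pullback_factor:
  assumes "total_preorder_on D ge" "range f \<subseteq> D" "\<And>p q. g p = g q \<Longrightarrow> f p = f q"
  obtains ge' where "total_preorder_on E ge'"
    and "(\<lambda>p q. ge (f p) (f q)) = (\<lambda>p q. ge' (g p) (g q))"
proof
  let ?h = "\<lambda>x. f (inv g x)"
  show "total_preorder_on E (\<lambda>x y. ge (?h x) (?h y))"
    using total_preorder_on_pullback[of D ge ?h E] assms(1,2) by blast
  have "?h (g p) = f p" for p
    by (rule assms(3)) (simp add: f_inv_into_f)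
  then show "(\<lambda>p q. ge (f p) (f q)) = (\<lambda>p q. ge (?h (g p)) (?h (g q)))"
    by simp
qed

lemma summable_discounted:
  fixes p :: "nat \<Rightarrow> real"
  assumes "0 \<le> \<gamma>" "\<gamma> < 1" "\<And>t. \<bar>p t\<bar> \<le> 1"
  shows "summable (\<lambda>t. \<gamma> ^ t * p t)"
proof (rule summable_comparison_test')
  show "summable (\<lambda>t. \<gamma> ^ t)"
    using assms by (simp add: summable_geometric)
  show "norm (\<gamma> ^ t * p t) \<le> \<gamma> ^ t" for t
    using assms by (simp add: abs_mult mult_left_le)
qed

lemma pmf_map_Pair: "pmf (map_pmf (Pair x) N) (x', y) = (if x' = x then pmf N y else 0)"
proof (cases "x' = x")
  case True
  then show ?thesis by (simp add: pmf_map_inj' inj_on_def)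
next
  case False
  then show ?thesis by (subst pmf_map_outside) auto
qed

lemma pmf_bind_map_Pair:
  "pmf (bind_pmf M (\<lambda>x. map_pmf (Pair x) (N x))) (x, y) = pmf M x * pmf (N x) y"
proof -
  have "pmf (bind_pmf M (\<lambda>x. map_pmf (Pair x) (N x))) (x, y)
      = (\<integral>x'. indicator {x} x' * pmf (N x) y \<partial>M)"
    unfolding pmf_bind by (rule Bochner_Integration.integral_cong) (auto simp: pmf_map_Pair)
  also have "\<dots> = pmf M x * pmf (N x) y"
    by (simp add: measure_pmf_single)
  finally show ?thesis .
qed

lemma length_traj: "(h, s) \<in> set_pmf (traj T I \<pi> t) \<Longrightarrow> length h = t"
  by (induction t arbitrary: h s) auto

definition state_dist :: "('s \<Rightarrow> 'a \<Rightarrow> 's pmf) \<Rightarrow> 's pmf \<Rightarrow> ('s, 'a) policy \<Rightarrow> nat \<Rightarrow> 's pmf"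
  where "state_dist T I \<pi> t = map_pmf snd (traj T I \<pi> t)"

definition transition_dist :: "('s \<Rightarrow> 'a \<Rightarrow> 's pmf) \<Rightarrow> 's pmf \<Rightarrow> ('s, 'a) policy \<Rightarrow> nat
    \<Rightarrow> ('s \<times> 'a \<times> 's) pmf"
  where "transition_dist T I \<pi> t =
    map_pmf (\<lambda>(h, s'). (fst (h ! t), snd (h ! t), s')) (traj T I \<pi> (Suc t))"

lemma transition_dist_eq:
  "transition_dist T I \<pi> t =
     bind_pmf (state_dist T I \<pi> t) (\<lambda>s. map_pmf (Pair s)
       (bind_pmf (\<pi> s) (\<lambda>a. map_pmf (Pair a) (T s a))))"
  unfolding transition_dist_def state_dist_def traj.simps bind_map_pmf map_bind_pmf
  by (rule bind_pmf_cong) (auto dest!: length_traj simp: map_bind_pmf pmf.map_comp o_def)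

lemma step_prob_eq_pmf_transition_dist:
  "step_prob T I \<pi> t s a s' = pmf (transition_dist T I \<pi> t) (s, a, s')"
  unfolding step_prob_def transition_dist_def pmf_map
  by (rule arg_cong[where f = "measure_pmf.prob _"]) auto

lemma step_prob_eq:
  "step_prob T I \<pi> t s a s' = pmf (state_dist T I \<pi> t) s * pmf (\<pi> s) a * pmf (T s a) s'"
  by (simp add: step_prob_eq_pmf_transition_dist transition_dist_eq pmf_bind_map_Pair)

lemma summable_discounted_step_prob:
  assumes "0 \<le> \<gamma>" "\<gamma> < 1"
  shows "summable (\<lambda>t. \<gamma> ^ t * step_prob T I \<pi> t s a s')"
  using assms by (rule summable_discounted) (simp add: step_prob_eq_pmf_transition_dist pmf_le_1)

lemma occupancy_eq_suminf_transition_dist: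
  "occupancy T I \<gamma> \<pi> x = (\<Sum>t. \<gamma> ^ t * pmf (transition_dist T I \<pi> t) x)"
  by (cases x) (simp add: occupancy_def step_prob_eq_pmf_transition_dist)

lemma ret_eq_sum_occupancy:
  fixes T :: "'s::finite \<Rightarrow> 'a::finite \<Rightarrow> 's pmf"
  assumes "0 \<le> \<gamma>" "\<gamma> < 1"
  shows "ret T I \<gamma> R \<pi> = (\<Sum>(s, a, s')\<in>UNIV. R s a s' * occupancy T I \<gamma> \<pi> (s, a, s'))"
proof -
  let ?R = "\<lambda>(s, a, s'). R s a s'"
  let ?p = "\<lambda>t. pmf (transition_dist T I \<pi> t)"
  have summable: "summable (\<lambda>t. \<gamma> ^ t * ?p t x)" for x
    using assms by (rule summable_discounted) (simp add: pmf_le_1)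
  have expectation_eq:
    "measure_pmf.expectation (traj T I \<pi> (Suc t)) (\<lambda>(h, s'). R (fst (h ! t)) (snd (h ! t)) s')
       = (\<Sum>x\<in>UNIV. ?R x * ?p t x)" for t
  proof -
    have "measure_pmf.expectation (traj T I \<pi> (Suc t))
            (\<lambda>(h, s'). R (fst (h ! t)) (snd (h ! t)) s')
        = measure_pmf.expectation (transition_dist T I \<pi> t) ?R"
      unfolding transition_dist_def integral_map_pmf
      by (rule Bochner_Integration.integral_cong) auto
    also have "\<dots> = (\<Sum>x\<in>UNIV. ?R x * ?p t x)"
      by (rule integral_measure_pmf_real) auto
    finally show ?thesis .
  qed
  have "ret T I \<gamma> R \<pi> = (\<Sum>t. \<Sum>x\<in>UNIV. ?R x * (\<gamma> ^ t * ?p t x))"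
    unfolding ret_def expectation_eq by (simp add: sum_distrib_left mult_ac)
  also have "\<dots> = (\<Sum>x\<in>UNIV. \<Sum>t. ?R x * (\<gamma> ^ t * ?p t x))"
    by (intro suminf_sum summable_mult summable)
  also have "\<dots> = (\<Sum>x\<in>UNIV. ?R x * occupancy T I \<gamma> \<pi> x)"
    by (simp add: occupancy_eq_suminf_transition_dist suminf_mult summable)
  finally show ?thesis
    by (simp add: case_prod_unfold)
qed

definition state_visitation :: "('s \<Rightarrow> 'a \<Rightarrow> 's pmf) \<Rightarrow> 's pmf \<Rightarrow> real \<Rightarrow> ('s, 'a) policy
    \<Rightarrow> 's \<Rightarrow> real"
  where "state_visitation T I \<gamma> \<pi> s = (\<Sum>t. \<gamma> ^ t * pmf (state_dist T I \<pi> t) s)"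

lemma summable_discounted_state_dist:
  assumes "0 \<le> \<gamma>" "\<gamma> < 1"
  shows "summable (\<lambda>t. \<gamma> ^ t * pmf (state_dist T I \<pi> t) s)"
  using assms by (rule summable_discounted) (simp add: pmf_le_1)

lemma state_visitation_pos:
  assumes "0 < \<gamma>" "\<gamma> < 1" "s \<in> set_pmf (state_dist T I \<pi> t)"
  shows "0 < state_visitation T I \<gamma> \<pi> s"
proof -
  have "0 < \<gamma> ^ t * pmf (state_dist T I \<pi> t) s"
    using assms by (simp add: pmf_positive)
  also have "\<dots> \<le> state_visitation T I \<gamma> \<pi> s"
    unfolding state_visitation_def using assms
    by (intro sum_le_suminf[where I = "{t}", simplified] summable_discounted_state_dist) auto
  finally show ?thesis .
qed

lemma occupancy_sum_next_state:
  fixes T :: "'s::finite \<Rightarrow> 'a::finite \<Rightarrow> 's pmf"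
  assumes "0 \<le> \<gamma>" "\<gamma> < 1"
  shows "(\<Sum>s'\<in>UNIV. occupancy T I \<gamma> \<pi> (s, a, s')) = state_visitation T I \<gamma> \<pi> s * pmf (\<pi> s) a"
proof -
  have "(\<Sum>s'\<in>UNIV. occupancy T I \<gamma> \<pi> (s, a, s'))
      = (\<Sum>t. \<Sum>s'\<in>UNIV. \<gamma> ^ t * step_prob T I \<pi> t s a s')"
    unfolding occupancy_def using assms
    by (simp add: suminf_sum summable_discounted_step_prob)
  also have "\<dots> = (\<Sum>t. \<gamma> ^ t * pmf (state_dist T I \<pi> t) s * pmf (\<pi> s) a)"
    by (simp add: step_prob_eq sum_pmf_eq_1 mult.assoc flip: sum_distrib_left)
  also have "\<dots> = state_visitation T I \<gamma> \<pi> s * pmf (\<pi> s) a"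
    unfolding state_visitation_def using assms
    by (simp add: suminf_mult2 summable_discounted_state_dist)
  finally show ?thesis .
qed

lemma state_visitation_eq_occupancy_sum:
  fixes T :: "'s::finite \<Rightarrow> 'a::finite \<Rightarrow> 's pmf"
  assumes "0 \<le> \<gamma>" "\<gamma> < 1"
  shows "state_visitation T I \<gamma> \<pi> s = (\<Sum>a\<in>UNIV. \<Sum>s'\<in>UNIV. occupancy T I \<gamma> \<pi> (s, a, s'))"
  by (simp add: occupancy_sum_next_state[OF assms] sum_pmf_eq_1 flip: sum_distrib_left)

lemma policy_eq_if_occupancy_eq:
  fixes T :: "'s::finite \<Rightarrow> 'a::finite \<Rightarrow> 's pmf"
  assumes "0 \<le> \<gamma>" "\<gamma> < 1" and occ: "occupancy T I \<gamma> \<pi>1 = occupancy T I \<gamma> \<pi>2"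
    and visited: "0 < state_visitation T I \<gamma> \<pi>1 s"
  shows "\<pi>1 s = \<pi>2 s"
proof (rule pmf_eqI)
  fix a
  have "state_visitation T I \<gamma> \<pi>1 s = state_visitation T I \<gamma> \<pi>2 s"
    by (simp add: state_visitation_eq_occupancy_sum[OF assms(1,2)] occ)
  moreover have "state_visitation T I \<gamma> \<pi>1 s * pmf (\<pi>1 s) a
      = state_visitation T I \<gamma> \<pi>2 s * pmf (\<pi>2 s) a"
    by (simp flip: occupancy_sum_next_state[OF assms(1,2)] add: occ)
  ultimately show "pmf (\<pi>1 s) a = pmf (\<pi>2 s) a"
    using visited by simp
qed

lemma traj_eq_if_occupancy_eq:
  fixes T :: "'s::finite \<Rightarrow> 'a::finite \<Rightarrow> 's pmf"
  assumes "0 < \<gamma>" "\<gamma> < 1" and occ: "occupancy T I \<gamma> \<pi>1 = occupancy T I \<gamma> \<pi>2"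
  shows "traj T I \<pi>1 t = traj T I \<pi>2 t"
proof (induction t)
  case 0
  show ?case by simp
next
  case (Suc t)
  show ?case
    unfolding traj.simps
  proof (rule bind_pmf_cong[OF Suc], clarify)
    fix h s assume "(h, s) \<in> set_pmf (traj T I \<pi>2 t)"
    then have "s \<in> set_pmf (state_dist T I \<pi>1 t)"
      by (force simp: state_dist_def Suc)
    then have "0 < state_visitation T I \<gamma> \<pi>1 s"
      using assms(1,2) by (intro state_visitation_pos)
    then have "\<pi>1 s = \<pi>2 s"
      using assms by (intro policy_eq_if_occupancy_eq) auto
    then show "\<pi>1 s \<bind> (\<lambda>a. map_pmf (\<lambda>s'. (h @ [(s, a)], s')) (T s a))
        = \<pi>2 s \<bind> (\<lambda>a. map_pmf (\<lambda>s'. (h @ [(s, a)], s')) (T s a))"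
      by simp
  qed
qed

lemma ret_vec_indicator_rewards:
  fixes T :: "'s::finite \<Rightarrow> 'a::finite \<Rightarrow> 's pmf"
  assumes "0 \<le> \<gamma>" "\<gamma> < 1"
  shows "ret_vec T I (length xs) \<gamma> (\<lambda>s a s' i. if xs ! i = (s, a, s') then 1 else 0) \<pi>
    = map (occupancy T I \<gamma> \<pi>) xs"
proof -
  have "ret T I \<gamma> (\<lambda>s a s'. if xs ! i = (s, a, s') then 1 else 0) \<pi>
      = occupancy T I \<gamma> \<pi> (xs ! i)" for i
  proof -
    have "ret T I \<gamma> (\<lambda>s a s'. if xs ! i = (s, a, s') then 1 else 0) \<pi>
        = (\<Sum>x\<in>UNIV. if xs ! i = x then occupancy T I \<gamma> \<pi> x else 0)"
      unfolding ret_eq_sum_occupancy[OF assms] by (intro sum.cong) auto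
    then show ?thesis
      by (simp add: sum.delta)
  qed
  then show ?thesis
    unfolding ret_vec_def by (intro nth_equalityI) simp_all
qed

lemma Ord_GOMORL_subset_Ord_OMO:
  fixes T :: "'s::finite \<Rightarrow> 'a::finite \<Rightarrow> 's pmf"
  shows "Ord_GOMORL T I \<subseteq> Ord_OMO T I"
proof
  fix ord assume "ord \<in> Ord_GOMORL T I"
  then obtain k R \<gamma> geJ where \<gamma>: "0 \<le> \<gamma>" "\<gamma> < 1"
    and geJ: "total_preorder_on {v. length v = k} geJ"
    and ord: "ord = (\<lambda>p q. geJ (ret_vec T I k \<gamma> R p) (ret_vec T I k \<gamma> R q))"
    unfolding Ord_GOMORL_def by blast
  have "range (ret_vec T I k \<gamma> R) \<subseteq> {v. length v = k}"
    by (auto simp: ret_vec_def)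
  moreover have "ret_vec T I k \<gamma> R p = ret_vec T I k \<gamma> R q"
    if "occupancy T I \<gamma> p = occupancy T I \<gamma> q" for p q
    using that by (simp add: ret_vec_def ret_eq_sum_occupancy[OF \<gamma>])
  ultimately obtain gem where "total_preorder_on (range (occupancy T I \<gamma>)) gem"
    and "ord = (\<lambda>p q. gem (occupancy T I \<gamma> p) (occupancy T I \<gamma> q))"
    unfolding ord by (rule total_preorder_pullback_factor[OF geJ])
  then show "ord \<in> Ord_OMO T I"
    unfolding Ord_OMO_def using \<gamma> by blast
qed

lemma Ord_OMO_subset_Ord_TLO:
  fixes T :: "'s::finite \<Rightarrow> 'a::finite \<Rightarrow> 's pmf"
  shows "Ord_OMO T I \<subseteq> Ord_TLO T I"
proof
  fix ord assume "ord \<in> Ord_OMO T I"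
  then obtain \<gamma> gem where gem: "total_preorder_on (range (occupancy T I \<gamma>)) gem"
    and ord: "ord = (\<lambda>p q. gem (occupancy T I \<gamma> p) (occupancy T I \<gamma> q))"
    unfolding Ord_OMO_def by blast
  have "occupancy T I \<gamma> p = occupancy T I \<gamma> q" if "lottery T I p = lottery T I q" for p q
    using that by (simp add: lottery_def occupancy_def step_prob_def)
  then obtain geL where "total_preorder_on (range (lottery T I)) geL"
    and "ord = (\<lambda>p q. geL (lottery T I p) (lottery T I q))"
    unfolding ord by (rule total_preorder_pullback_factor[OF gem subset_refl])
  then show "ord \<in> Ord_TLO T I"
    unfolding Ord_TLO_def by blast
qed

lemma Ord_TLO_subset_Ord_GOMORL:
  fixes T :: "'s::finite \<Rightarrow> 'a::finite \<Rightarrow> 's pmf"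
  shows "Ord_TLO T I \<subseteq> Ord_GOMORL T I"
proof
  fix ord assume "ord \<in> Ord_TLO T I"
  then obtain geL where geL: "total_preorder_on (range (lottery T I)) geL"
    and ord: "ord = (\<lambda>p q. geL (lottery T I p) (lottery T I q))"
    unfolding Ord_TLO_def by blast
  obtain xs :: "('s \<times> 'a \<times> 's) list" where xs: "set xs = UNIV"
    using finite_list[OF finite_class.finite_UNIV] by blast
  define R :: "'s \<Rightarrow> 'a \<Rightarrow> 's \<Rightarrow> nat \<Rightarrow> real"
    where "R = (\<lambda>s a s' i. if xs ! i = (s, a, s') then 1 else 0)"
  define \<gamma> :: real where "\<gamma> = 1 / 2"
  have \<gamma>: "0 < \<gamma>" "\<gamma> < 1"
    by (simp_all add: \<gamma>_def)
  have ret_vec_R: "ret_vec T I (length xs) \<gamma> R \<pi> = map (occupancy T I \<gamma> \<pi>) xs" for \<pi>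
    unfolding R_def using \<gamma> by (intro ret_vec_indicator_rewards) simp_all
  have "lottery T I p = lottery T I q"
    if "ret_vec T I (length xs) \<gamma> R p = ret_vec T I (length xs) \<gamma> R q" for p q
  proof -
    have "\<forall>x\<in>set xs. occupancy T I \<gamma> p x = occupancy T I \<gamma> q x"
      using that by (simp add: ret_vec_R)
    then have occ: "occupancy T I \<gamma> p = occupancy T I \<gamma> q"
      using xs by auto
    show ?thesis
      unfolding lottery_def by (rule ext, rule traj_eq_if_occupancy_eq[OF \<gamma> occ])
  qed
  then obtain geJ where "total_preorder_on {v. length v = length xs} geJ"
    and "ord = (\<lambda>p q. geJ (ret_vec T I (length xs) \<gamma> R p) (ret_vec T I (length xs) \<gamma> R q))"
    unfolding ord by (rule total_preorder_pullback_factor[OF geL subset_refl])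
  then show "ord \<in> Ord_GOMORL T I"
    unfolding Ord_GOMORL_def using less_imp_le[OF \<gamma>(1)] \<gamma>(2) by blast
qed

theorem theorem3:
  fixes T :: "'s::finite \<Rightarrow> 'a::finite \<Rightarrow> 's pmf" and I :: "'s pmf"
  shows "Ord_GOMORL T I = Ord_OMO T I \<and> Ord_OMO T I = Ord_TLO T I"
  using Ord_GOMORL_subset_Ord_OMO Ord_OMO_subset_Ord_TLO Ord_TLO_subset_Ord_GOMORL by blast

end
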